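(* Let $g$ be an $n$-person no-sink WTT game form satisfying the standing assumptions below. Then $g$ contains no $1$-box.
   Context: Let $X_1,\dots,X_n$ and $A$ be finite nonempty sets. An $n$-person game form is a map $g: X_1\times\cdots\times X_n\to A$; elements of $X=X_1\times\cdots\times X_n$ are strategy profiles. For a direction $i\in[n]$ write $X_{-i}=\prod_{t\neq i}X_t$, and for $s\in X_i$, $y\in X_{-i}$ write $(s,y)$ for the profile with $i$-th coordinate $s$ and other coordinates $y$. The hyperplane perpendicular to direction $i$ at $s\in X_i$ is $H_s=\{x\in X: x_i=s\}$; for a profile $x$ write $H_i^x$ for the hyperplane perpendicular to direction $i$ containing $x$. $g$ is weakly totally tight (WTT) if for every $i\in[n]$, all $s\neq s'$ in $X_i$ and all $y\neq y'$ in $X_{-i}$, at least one of $g(s,y)=g(s,y')$, $g(s,y)=g(s',y)$, $g(s',y')=g(s',y)$, $g(s',y')=g(s,y')$ holds. A set $S\subseteq X$ is a constant region if there is $c\in A$ with $g(x)=c$ for all $x\in S$. For distinct $j,k\in X_i$, $H_j^{\neq}(k)=\{(j,y): y\in X_{-i},\ g(j,y)\neq g(k,y)\}$. We write $H_j\stackrel{c}{\longrightarrow}H_k$ if $g(x)=c$ for all $x\in H_j^{\neq}(k)$, and $H_j\stackrel{c}{\Longrightarrow}H_k$ if $H_j\stackrel{c}{\longrightarrow}H_k$ and there is no outcome $d$ with $H_k\stackrel{d}{\longrightarrow}H_j$. If there exist $k\in X_i\setminus\{j\}$ and $c$ with $H_j\stackrel{c}{\Longrightarrow}H_k$, $c$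 is called the proper outcome of $H_j$ (for WTT $g$ it does not depend on $k$). We say an outcome $a$ is not the proper outcome of a hyperplane $H$ if $H$ has no proper outcome or its proper outcome differs from $a$. $H_j$ is a sink hyperplane if for every $k\in X_i\setminus\{j\}$ there is an outcome $c_k$ with $H_k\stackrel{c_k}{\longrightarrow}H_j$; $g$ is no-sink if there is no sink hyperplane in any direction. A WTT no-sink $g$ contains a $k$-box if there are profiles $x,y$ such that: $g(x)\neq g(y)$; $x$ and $y$ differ in exactly $k$ coordinates $i_1,\dots,i_k$; and for every $1\le t\le k$, $g(x)$ is not the proper outcome of $H_{i_t}^x$ and $g(y)$ is not the proper outcome of $H_{i_t}^y$. Standing assumptions: no hyperplane of $g$ is a constant region, and for every $i$ and distinct $j,k\in X_i$ there is $y\in X_{-i}$ with $g(j,y)\neq g(k,y)$. *)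

theory Defs
  imports Main "HOL-Library.FuncSet"
begin

text \<open>For a profile x, the pair
(s,y) with y in X_{-i} is represented by x(i := s), where y is the restriction of
x to the coordinates other than i.\<close>

definition profiles :: "nat \<Rightarrow> (nat \<Rightarrow> 's set) \<Rightarrow> (nat \<Rightarrow> 's) set" where
  "profiles n X = PiE {0..<n} X"

definition game_form :: "nat \<Rightarrow> (nat \<Rightarrow> 's set) \<Rightarrow> 'o set \<Rightarrow> ((nat \<Rightarrow> 's) \<Rightarrow> 'o) \<Rightarrow> bool" where
  "game_form n X A g \<longleftrightarrow>
     (\<forall>i<n. finite (X i) \<and> X i \<noteq> {}) \<and> finite A \<and> A \<noteq> {} \<and>
     (\<forall>x\<in>profiles n X. g x \<in> A)"

text \<open>y and y' (the restrictions of x and x' to coordinates other than i) differ.\<close>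
definition differ_off :: "nat \<Rightarrow> nat \<Rightarrow> (nat \<Rightarrow> 's) \<Rightarrow> (nat \<Rightarrow> 's) \<Rightarrow> bool" where
  "differ_off n i x x' \<longleftrightarrow> (\<exists>t<n. t \<noteq> i \<and> x t \<noteq> x' t)"

definition WTT :: "nat \<Rightarrow> (nat \<Rightarrow> 's set) \<Rightarrow> ((nat \<Rightarrow> 's) \<Rightarrow> 'o) \<Rightarrow> bool" where
  "WTT n X g \<longleftrightarrow>
     (\<forall>i<n. \<forall>s\<in>X i. \<forall>s'\<in>X i. s \<noteq> s' \<longrightarrow>
        (\<forall>x\<in>profiles n X. \<forall>x'\<in>profiles n X. differ_off n i x x' \<longrightarrow>
           g (x(i := s)) = g (x'(i := s)) \<or>
           g (x(i := s)) = g (x(i := s')) \<or>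
           g (x'(i := s')) = g (x(i := s')) \<or>
           g (x'(i := s')) = g (x'(i := s))))"

definition Hneq :: "nat \<Rightarrow> (nat \<Rightarrow> 's set) \<Rightarrow> ((nat \<Rightarrow> 's) \<Rightarrow> 'o) \<Rightarrow> nat \<Rightarrow> 's \<Rightarrow> 's \<Rightarrow> (nat \<Rightarrow> 's) set" where
  "Hneq n X g i j k = {x \<in> profiles n X. x i = j \<and> g x \<noteq> g (x(i := k))}"

definition arrow :: "nat \<Rightarrow> (nat \<Rightarrow> 's set) \<Rightarrow> ((nat \<Rightarrow> 's) \<Rightarrow> 'o) \<Rightarrow> nat \<Rightarrow> 's \<Rightarrow> 'o \<Rightarrow> 's \<Rightarrow> bool" where
  "arrow n X g i j c k \<longleftrightarrow> (\<forall>x\<in>Hneq n X g i j k. g x = c)"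

definition darrow :: "nat \<Rightarrow> (nat \<Rightarrow> 's set) \<Rightarrow> 'o set \<Rightarrow> ((nat \<Rightarrow> 's) \<Rightarrow> 'o) \<Rightarrow> nat \<Rightarrow> 's \<Rightarrow> 'o \<Rightarrow> 's \<Rightarrow> bool" where
  "darrow n X A g i j c k \<longleftrightarrow> arrow n X g i j c k \<and> \<not> (\<exists>d\<in>A. arrow n X g i k d j)"

definition proper_outcome :: "nat \<Rightarrow> (nat \<Rightarrow> 's set) \<Rightarrow> 'o set \<Rightarrow> ((nat \<Rightarrow> 's) \<Rightarrow> 'o) \<Rightarrow> nat \<Rightarrow> 's \<Rightarrow> 'o \<Rightarrow> bool" where
  "proper_outcome n X A g i j c \<longleftrightarrow> c \<in> A \<and> (\<exists>k\<in>X i. k \<noteq> j \<and> darrow n X A g i j c k)"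

definition sink_hyperplane :: "nat \<Rightarrow> (nat \<Rightarrow> 's set) \<Rightarrow> 'o set \<Rightarrow> ((nat \<Rightarrow> 's) \<Rightarrow> 'o) \<Rightarrow> nat \<Rightarrow> 's \<Rightarrow> bool" where
  "sink_hyperplane n X A g i j \<longleftrightarrow> (\<forall>k\<in>X i. k \<noteq> j \<longrightarrow> (\<exists>c\<in>A. arrow n X g i k c j))"

definition no_sink :: "nat \<Rightarrow> (nat \<Rightarrow> 's set) \<Rightarrow> 'o set \<Rightarrow> ((nat \<Rightarrow> 's) \<Rightarrow> 'o) \<Rightarrow> bool" where
  "no_sink n X A g \<longleftrightarrow> (\<forall>i<n. \<forall>j\<in>X i. \<not> sink_hyperplane n X A g i j)"

definition standing_assumptions :: "nat \<Rightarrow> (nat \<Rightarrow> 's set) \<Rightarrow> ((nat \<Rightarrow> 's) \<Rightarrow> 'o) \<Rightarrow> bool" where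
  "standing_assumptions n X g \<longleftrightarrow>
     (\<forall>i<n. \<forall>s\<in>X i. \<not> (\<exists>c. \<forall>x\<in>profiles n X. x i = s \<longrightarrow> g x = c)) \<and>
     (\<forall>i<n. \<forall>j\<in>X i. \<forall>k\<in>X i. j \<noteq> k \<longrightarrow>
        (\<exists>x\<in>profiles n X. g (x(i := j)) \<noteq> g (x(i := k))))"

definition contains_box :: "nat \<Rightarrow> (nat \<Rightarrow> 's set) \<Rightarrow> 'o set \<Rightarrow> ((nat \<Rightarrow> 's) \<Rightarrow> 'o) \<Rightarrow> nat \<Rightarrow> bool" where
  "contains_box n X A g k \<longleftrightarrow>
     (\<exists>x\<in>profiles n X. \<exists>y\<in>profiles n X. g x \<noteq> g y \<and>
        card {t\<in>{0..<n}. x t \<noteq> y t} = k \<and>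
        (\<forall>t\<in>{0..<n}. x t \<noteq> y t \<longrightarrow>
           \<not> proper_outcome n X A g t (x t) (g x) \<and> \<not> proper_outcome n X A g t (y t) (g y)))"

end

theory Submission
  imports Defs
begin

text \<open>Fix the direction i and write x_u for the profile x(i := u). By weak total tightness,
any two profiles p, q with g p_u \<noteq> g p_v and g q_u \<noteq> g q_v satisfy g p_u = g q_u or
g p_v = g q_v; hence such a p forces H_u \<rightarrow> H_v with outcome g p_u or H_v \<rightarrow> H_u with
outcome g p_v. For a 1-box x_j, x_k this yields H_j \<rightarrow> H_k with outcome a = g x_j, because
b = g x_k is not proper for H_k. Since H_j is not a sink, some H_k' admits no arrow into H_j,
so H_j \<rightarrow> H_k' with an outcome c, and c \<noteq> a as a is not proper for H_j. Chasing these
arrows shows that g x_k' = a, that H_k \<rightarrow> H_k' with outcome b, and that H_k' admits no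
arrow back: b is proper for H_k after all.\<close>

lemma profiles_fun_upd:
  assumes "p \<in> profiles n X" "i < n" "u \<in> X i"
  shows "p(i := u) \<in> profiles n X"
  using assms unfolding profiles_def PiE_def Pi_def extensional_def by auto

lemma fun_upd_eq_if_agree_off:
  assumes "p \<in> profiles n X" "q \<in> profiles n X" "\<And>t. t < n \<Longrightarrow> t \<noteq> i \<Longrightarrow> p t = q t"
  shows "p(i := u) = q(i := u)"
proof
  fix t
  show "(p(i := u)) t = (q(i := u)) t"
  proof (cases "t < n")
    case False
    then have "p t = undefined" "q t = undefined"
      using assms(1,2) unfolding profiles_def PiE_def extensional_def by auto
    then show ?thesis by simp
  qed (use assms(3) in simp)
qed

lemma game_form_outcome_fun_upd:
  assumes "game_form n X A g" "p \<in> profiles n X" "i < n" "u \<in> X i"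
  shows "g (p(i := u)) \<in> A"
  using assms(1) profiles_fun_upd[OF assms(2-4)] unfolding game_form_def by blast

lemma arrow_iff:
  assumes "i < n" "u \<in> X i"
  shows "arrow n X g i u c v \<longleftrightarrow>
     (\<forall>p\<in>profiles n X. g (p(i := u)) \<noteq> g (p(i := v)) \<longrightarrow> g (p(i := u)) = c)"
proof
  assume arr: "arrow n X g i u c v"
  show "\<forall>p\<in>profiles n X. g (p(i := u)) \<noteq> g (p(i := v)) \<longrightarrow> g (p(i := u)) = c"
  proof (intro ballI impI)
    fix p assume "p \<in> profiles n X" "g (p(i := u)) \<noteq> g (p(i := v))"
    then have "p(i := u) \<in> Hneq n X g i u v"
      using profiles_fun_upd[of p n X i u] assms unfolding Hneq_def by simp
    then show "g (p(i := u)) = c" using arr unfolding arrow_def by blast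
  qed
next
  assume lines: "\<forall>p\<in>profiles n X. g (p(i := u)) \<noteq> g (p(i := v)) \<longrightarrow> g (p(i := u)) = c"
  show "arrow n X g i u c v"
    unfolding arrow_def Hneq_def
  proof
    fix q assume "q \<in> {x \<in> profiles n X. x i = u \<and> g x \<noteq> g (x(i := v))}"
    then have q: "q \<in> profiles n X" "q(i := u) = q" "g q \<noteq> g (q(i := v))" by auto
    then show "g q = c" using lines by (metis (no_types))
  qed
qed

lemma arrow_outcome:
  assumes "arrow n X g i u c v" "i < n" "u \<in> X i"
    and "p \<in> profiles n X" "g (p(i := u)) \<noteq> g (p(i := v))"
  shows "g (p(i := u)) = c"
  using assms(1,4,5) arrow_iff[where X=X and g=g, OF assms(2,3)] by blast

lemma WTT_disagreeing_lines:
  assumes WTT: "WTT n X g" and i: "i < n" and uv: "u \<in> X i" "v \<in> X i"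
    and p: "p \<in> profiles n X" and q: "q \<in> profiles n X"
    and p_sep: "g (p(i := u)) \<noteq> g (p(i := v))" and q_sep: "g (q(i := u)) \<noteq> g (q(i := v))"
  shows "g (p(i := u)) = g (q(i := u)) \<or> g (p(i := v)) = g (q(i := v))"
proof (cases "differ_off n i p q")
  case True
  have "u \<noteq> v" using p_sep by auto
  then have "g (p(i := u)) = g (q(i := u)) \<or> g (p(i := u)) = g (p(i := v)) \<or>
      g (q(i := v)) = g (p(i := v)) \<or> g (q(i := v)) = g (q(i := u))"
    by (rule WTT[unfolded WTT_def, rule_format, OF i uv _ p q True])
  then show ?thesis using p_sep q_sep by auto
next
  case False
  then have "p(i := u) = q(i := u)"
    using fun_upd_eq_if_agree_off[OF p q] unfolding differ_off_def by blast
  then show ?thesis by simp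
qed

lemma WTT_arrow_or_converse:
  assumes WTT: "WTT n X g" and i: "i < n" and uv: "u \<in> X i" "v \<in> X i"
    and x: "x \<in> profiles n X" and x_sep: "g (x(i := u)) \<noteq> g (x(i := v))"
  shows "arrow n X g i u (g (x(i := u))) v \<or> arrow n X g i v (g (x(i := v))) u"
proof (rule disjCI)
  assume "\<not> arrow n X g i v (g (x(i := v))) u"
  then obtain p where p: "p \<in> profiles n X" "g (p(i := u)) \<noteq> g (p(i := v))"
    and p_v: "g (p(i := v)) \<noteq> g (x(i := v))"
    unfolding arrow_iff[where X=X and g=g, OF i uv(2)] by auto
  note lines = WTT_disagreeing_lines[OF WTT i uv]
  have p_u: "g (p(i := u)) = g (x(i := u))"
    using lines[OF p(1) x p(2) x_sep] p_v by simp
  show "arrow n X g i u (g (x(i := u))) v"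
    unfolding arrow_iff[where X=X and g=g, OF i uv(1)]
  proof (intro ballI impI)
    fix q assume q: "q \<in> profiles n X" "g (q(i := u)) \<noteq> g (q(i := v))"
    show "g (q(i := u)) = g (x(i := u))"
    proof (rule ccontr)
      assume q_u: "g (q(i := u)) \<noteq> g (x(i := u))"
      then have "g (q(i := v)) = g (x(i := v))" using lines[OF q(1) x q(2) x_sep] by simp
      then show False using lines[OF q(1) p(1) q(2) p(2)] p_u p_v q_u by simp
    qed
  qed
qed

lemma proper_outcome_if_no_converse_arrow:
  assumes "arrow n X g i u c v" "c \<in> A" "v \<in> X i" "v \<noteq> u"
    and "\<forall>d\<in>A. \<not> arrow n X g i v d u"
  shows "proper_outcome n X A g i u c"
  using assms unfolding proper_outcome_def darrow_def by auto

text \<open>The arrow H_v \<rightarrow> H_u with outcome g x_v is not strict, so H_u \<rightarrow> H_v with some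
outcome, which can only be g x_u.\<close>
lemma arrow_if_not_proper_outcome:
  assumes gf: "game_form n X A g" and WTT: "WTT n X g" and i: "i < n" and uv: "u \<in> X i" "v \<in> X i"
    and x: "x \<in> profiles n X" and x_sep: "g (x(i := u)) \<noteq> g (x(i := v))"
    and not_proper: "\<not> proper_outcome n X A g i v (g (x(i := v)))"
  shows "arrow n X g i u (g (x(i := u))) v"
proof (rule ccontr)
  assume no_arrow: "\<not> arrow n X g i u (g (x(i := u))) v"
  then have vu_arrow: "arrow n X g i v (g (x(i := v))) u"
    using WTT_arrow_or_converse[OF WTT i uv x x_sep] by blast
  have "u \<noteq> v" using x_sep by auto
  then obtain d where "arrow n X g i u d v"
    using proper_outcome_if_no_converse_arrow[OF vu_arrow game_form_outcome_fun_upd[OF gf x i uv(2)] uv(1)]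
      not_proper by blast
  moreover from this have "g (x(i := u)) = d" by (rule arrow_outcome[OF _ i uv(1) x x_sep])
  ultimately show False using no_arrow by simp
qed

lemma arrow_from_third_hyperplane:
  assumes i: "i < n" and uw: "u \<in> X i" "w \<in> X i"
    and uv_arrow: "arrow n X g i u a v" and uw_arrow: "arrow n X g i u c w" and "a \<noteq> c"
    and wv_arrow: "arrow n X g i w a v"
  shows "arrow n X g i w a u"
  unfolding arrow_iff[where X=X and g=g, OF i uw(2)]
proof (intro ballI impI)
  fix p assume p: "p \<in> profiles n X" "g (p(i := w)) \<noteq> g (p(i := u))"
  have p_u: "g (p(i := u)) = c" by (rule arrow_outcome[OF uw_arrow i uw(1) p(1) p(2)[symmetric]])
  have "g (p(i := v)) = c"
  proof (rule ccontr)
    assume "g (p(i := v)) \<noteq> c"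
    then have "g (p(i := u)) = a" using p_u by (intro arrow_outcome[OF uv_arrow i uw(1) p(1)]) simp
    with p_u \<open>a \<noteq> c\<close> show False by simp
  qed
  with p p_u have "g (p(i := w)) \<noteq> g (p(i := v))" by simp
  then show "g (p(i := w)) = a" by (rule arrow_outcome[OF wv_arrow i uw(2) p(1)])
qed

lemma proper_outcome_across_arrows:
  assumes gf: "game_form n X A g" and WTT: "WTT n X g"
    and i: "i < n" and jk: "j \<in> X i" "k \<in> X i" "k' \<in> X i" and x: "x \<in> profiles n X"
    and x_sep: "g (x(i := j)) \<noteq> g (x(i := k))"
    and jk_arrow: "arrow n X g i j (g (x(i := j))) k"
    and jk'_arrow: "arrow n X g i j c k'" and "g (x(i := j)) \<noteq> c"
    and no_arrow_k'j: "\<forall>d\<in>A. \<not> arrow n X g i k' d j"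
  shows "proper_outcome n X A g i k (g (x(i := k)))"
proof -
  define a where "a = g (x(i := j))"
  note in_A = game_form_outcome_fun_upd[OF gf x i]
  have x_k': "g (x(i := k')) = a"
  proof (rule ccontr)
    assume "g (x(i := k')) \<noteq> a"
    then have "g (x(i := j)) = c"
      unfolding a_def by (intro arrow_outcome[OF jk'_arrow i jk(1) x]) simp
    with \<open>g (x(i := j)) \<noteq> c\<close> show False by simp
  qed
  with x_sep have x_sep': "g (x(i := k)) \<noteq> g (x(i := k'))" unfolding a_def by simp
  have no_arrow_k'k: "\<forall>d\<in>A. \<not> arrow n X g i k' d k"
  proof (intro ballI notI)
    fix d assume "arrow n X g i k' d k"
    moreover from this have "g (x(i := k')) = d"
      by (rule arrow_outcome[OF _ i jk(3) x x_sep'[symmetric]])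
    ultimately have "arrow n X g i k' a j"
      using arrow_from_third_hyperplane[OF i jk(1) jk(3) jk_arrow jk'_arrow] x_k'
        \<open>g (x(i := j)) \<noteq> c\<close> unfolding a_def by simp
    with no_arrow_k'j in_A[OF jk(1)] show False unfolding a_def by blast
  qed
  have kk'_arrow: "arrow n X g i k (g (x(i := k))) k'"
    using WTT_arrow_or_converse[OF WTT i jk(2,3) x x_sep'] no_arrow_k'k in_A[OF jk(3)] by blast
  have "k' \<noteq> k" using x_sep' by auto
  then show ?thesis
    by (rule proper_outcome_if_no_converse_arrow[OF kk'_arrow in_A[OF jk(2)] jk(3) _ no_arrow_k'k])
qed

lemma no_one_box_in_direction:
  assumes gf: "game_form n X A g" and WTT: "WTT n X g"
    and no_sink: "no_sink n X A g" and standing: "standing_assumptions n X g"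
    and i: "i < n" and jk: "j \<in> X i" "k \<in> X i" and x: "x \<in> profiles n X"
    and x_sep: "g (x(i := j)) \<noteq> g (x(i := k))"
    and not_proper_j: "\<not> proper_outcome n X A g i j (g (x(i := j)))"
    and not_proper_k: "\<not> proper_outcome n X A g i k (g (x(i := k)))"
  shows False
proof -
  have jk_arrow: "arrow n X g i j (g (x(i := j))) k"
    by (rule arrow_if_not_proper_outcome[OF gf WTT i jk x x_sep not_proper_k])
  obtain k' where k': "k' \<in> X i" "k' \<noteq> j" and no_arrow_k'j: "\<forall>d\<in>A. \<not> arrow n X g i k' d j"
    using no_sink[unfolded no_sink_def, rule_format, OF i jk(1)]
    unfolding sink_hyperplane_def by blast
  obtain w where w: "w \<in> profiles n X" "g (w(i := j)) \<noteq> g (w(i := k'))"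
    using conjunct2[OF standing[unfolded standing_assumptions_def], rule_format,
        OF i jk(1) k'(1) k'(2)[symmetric]] by blast
  define c where "c = g (w(i := j))"
  have jk'_arrow: "arrow n X g i j c k'"
    using WTT_arrow_or_converse[OF WTT i jk(1) k'(1) w] no_arrow_k'j
      game_form_outcome_fun_upd[OF gf w(1) i k'(1)]
    unfolding c_def by blast
  have "g (x(i := j)) \<noteq> c"
  proof
    assume "g (x(i := j)) = c"
    then have "proper_outcome n X A g i j (g (x(i := j)))"
      using proper_outcome_if_no_converse_arrow[OF jk'_arrow _ k' no_arrow_k'j]
        game_form_outcome_fun_upd[OF gf x i jk(1)] by simp
    with not_proper_j show False by simp
  qed
  with proper_outcome_across_arrows[OF gf WTT i jk k'(1) x x_sep jk_arrow jk'_arrow _ no_arrow_k'j]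
    not_proper_k show False by blast
qed

theorem mainTheorem7:
  fixes n :: nat and X :: "nat \<Rightarrow> 's set" and A :: "'o set" and g :: "(nat \<Rightarrow> 's) \<Rightarrow> 'o"
  assumes "game_form n X A g"
    and "WTT n X g"
    and "no_sink n X A g"
    and "standing_assumptions n X g"
  shows "\<not> contains_box n X A g 1"
proof
  assume "contains_box n X A g 1"
  then obtain x y where x: "x \<in> profiles n X" and y: "y \<in> profiles n X" and "g x \<noteq> g y"
    and card: "card {t\<in>{0..<n}. x t \<noteq> y t} = 1"
    and not_proper: "\<forall>t\<in>{0..<n}. x t \<noteq> y t \<longrightarrow>
           \<not> proper_outcome n X A g t (x t) (g x) \<and> \<not> proper_outcome n X A g t (y t) (g y)"
    unfolding contains_box_def by blast
  from card obtain i where diff: "{t\<in>{0..<n}. x t \<noteq> y t} = {i}"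
    using card_1_singletonE by blast
  then have i: "i < n" "x i \<noteq> y i" and agree: "\<And>t. t < n \<Longrightarrow> t \<noteq> i \<Longrightarrow> x t = y t"
    by auto
  have "x(i := y i) = y(i := y i)" by (rule fun_upd_eq_if_agree_off[OF x y agree])
  then have x_i: "x(i := x i) = x" and y_i: "x(i := y i) = y" by simp_all
  have in_X: "x i \<in> X i" "y i \<in> X i" using x y i unfolding profiles_def by auto
  have "\<not> proper_outcome n X A g i (x i) (g x)" "\<not> proper_outcome n X A g i (y i) (g y)"
    using not_proper i by auto
  with no_one_box_in_direction[OF assms i(1) in_X x, unfolded x_i y_i] \<open>g x \<noteq> g y\<close>
  show False by blast
qed

end
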